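(* Let $\rho$ be a $(0,\infty)$-valued random variable with $\mathbb E\rho=1$, $c_k>0$, $\mu_k>0$, $d_0\ge0$ and $d_{k+1}=\mathbb E\big[\frac{c_k(\mu_k\rho+d_k)}{c_k+(\mu_k\rho+d_k)}\big]$. Suppose $c_k\sim L_c(k)k^a$ and $\mu_k\sim L_\mu(k)k^b$ as $k\to\infty$ with $a,b\in\mathbb R$ and $L_c,L_\mu$ slowly varying at infinity, and that $K=\lim_{k\to\infty}\mu_k/c_k\in[0,\infty]$ exists. Then: (a) if $K=\infty$, $\lim_{k\to\infty}d_k/c_k=1$; (b) if $K\in(0,\infty)$, $\lim_{k\to\infty}d_k/c_k=M$, where $M\in(0,1)$ is the unique solution of $M=\mathbb E\big[\frac{K\rho+M}{1+(K\rho+M)}\big]$. *)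

theory Defs
  imports "HOL-Probability.Probability" "HOL-Library.Landau_Symbols"
begin

definition slowly_varying :: "(real \<Rightarrow> real) \<Rightarrow> bool" where
  "slowly_varying L \<longleftrightarrow>
     L \<in> borel_measurable borel \<and>
     (\<forall>\<^sub>F x in at_top. L x > 0) \<and>
     (\<forall>l>0. ((\<lambda>x. L (l * x) / L x) \<longlongrightarrow> 1) at_top)"

end

theory Submission
  imports Defs
begin

text \<open>
  With \<open>r\<^sub>k = d\<^sub>k / c\<^sub>k\<close> and \<open>s\<^sub>k = \<mu>\<^sub>k / c\<^sub>k\<close> the recursion becomes
  \<open>r\<^sub>k\<^sub>+\<^sub>1 = (c\<^sub>k / c\<^sub>k\<^sub>+\<^sub>1) G(s\<^sub>k, r\<^sub>k)\<close>, where \<open>G(s, r) = E[(s\<rho> + r) / (1 + s\<rho> + r)]\<close>,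
  and regular variation of \<open>c\<close> gives \<open>c\<^sub>k / c\<^sub>k\<^sub>+\<^sub>1 \<rightarrow> 1\<close>. If \<open>s\<^sub>k \<rightarrow> \<infinity>\<close>, dominated
  convergence gives \<open>G(s\<^sub>k, 0) \<rightarrow> 1\<close>, and \<open>r\<^sub>k\<^sub>+\<^sub>1\<close> is squeezed between
  \<open>(c\<^sub>k / c\<^sub>k\<^sub>+\<^sub>1) G(s\<^sub>k, 0)\<close> and \<open>c\<^sub>k / c\<^sub>k\<^sub>+\<^sub>1\<close>. If \<open>s\<^sub>k \<rightarrow> K \<in> (0, \<infinity>)\<close>, then \<open>G(K, \<cdot>)\<close>
  is a contraction of \<open>[0, \<infinity>)\<close> with constant \<open>E[1 / (1 + K\<rho>)] < 1\<close> and \<open>G\<close> is Lipschitz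
  in \<open>s\<close>, so \<open>r\<^sub>k\<close> follows a contraction up to errors tending to 0 and converges to the
  unique fixed point \<open>M\<close>.
\<close>

lemma emeasure_lborel_vimage_scale:
  fixes t :: real
  assumes "t > 0" and "B \<in> sets borel"
  shows "emeasure lborel B = ennreal t * emeasure lborel ((*) t -` B)"
proof -
  have "emeasure lborel B = emeasure (density (distr lborel borel (\<lambda>x. 0 + t * x)) (\<lambda>_. ennreal \<bar>t\<bar>)) B"
    using lborel_real_affine[of t 0] assms by simp
  also have "\<dots> = ennreal t * emeasure lborel ((*) t -` B)"
    using assms by (simp add: emeasure_density nn_integral_cmult_indicator emeasure_distr)
  finally show ?thesis .
qed

lemma emeasure_lborel_vimage_scale_le:
  fixes t :: real
  assumes "1 \<le> t" and "B \<in> sets borel"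
  shows "emeasure lborel ((*) t -` B) \<le> emeasure lborel B"
proof -
  have "emeasure lborel ((*) t -` B) \<le> ennreal t * emeasure lborel ((*) t -` B)"
    using mult_right_mono[of 1 "ennreal t"] assms(1) by (simp add: ennreal_ge_1)
  also have "\<dots> = emeasure lborel B"
    using emeasure_lborel_vimage_scale[of t B] assms by simp
  finally show ?thesis .
qed

lemma large_subset_contains_scaled_pair:
  fixes A :: "real set" and t :: real
  assumes A: "A \<in> sets borel" "A \<subseteq> {1..2}" "measure lborel A > 3/4"
    and t: "1 \<le> t" "t \<le> 4/3"
  shows "\<exists>l\<in>A. t * l \<in> A"
proof (rule ccontr)
  assume no_pair: "\<not> (\<exists>l\<in>A. t * l \<in> A)"
  define B where "B = {1..2} - A"
  have B[measurable]: "B \<in> sets borel" using A by (simp add: B_def)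
  have "emeasure lborel B \<le> emeasure lborel {1..2::real}"
    by (rule emeasure_mono) (auto simp: B_def)
  then have eB: "emeasure lborel B = ennreal (measure lborel B)"
    by (intro emeasure_eq_ennreal_measure) (auto simp: top_unique)
  have "measure lborel B = 1 - measure lborel A"
    unfolding B_def using A by (subst measure_Diff) auto
  then have small: "2 * measure lborel B < 1/2" using A(3) by simp
  have "{1..3/2} \<subseteq> B \<union> (*) t -` B"
  proof
    fix x :: real assume x: "x \<in> {1..3/2}"
    have "1 \<le> t * x" "t * x \<le> 2"
      using x t mult_mono[of 1 t 1 x] mult_mono[of t "4/3" x "3/2"] by auto
    then show "x \<in> B \<union> (*) t -` B" using x no_pair by (auto simp: B_def)
  qed
  moreover have "(*) t -` B \<in> sets borel"
    using measurable_sets[of "(*) t" borel borel B] by simp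
  ultimately have "ennreal (1/2) \<le> emeasure lborel B + emeasure lborel ((*) t -` B)"
    by (intro order_trans[OF _ order_trans[OF emeasure_mono emeasure_subadditive]]) auto
  also have "\<dots> \<le> emeasure lborel B + emeasure lborel B"
    using emeasure_lborel_vimage_scale_le[OF t(1) B] by (rule add_left_mono)
  also have "\<dots> = ennreal (2 * measure lborel B)"
    by (simp add: eB ennreal_plus[symmetric] del: ennreal_plus)
  finally have "1/2 \<le> 2 * measure lborel B"
    by (rule ennreal_le_iff[THEN iffD1, rotated]) simp
  then show False using small by simp
qed

lemma slowly_varying_uniform_on_large_set:
  assumes "slowly_varying L" and "\<epsilon> > 0"
  obtains A n0 where "A \<in> sets borel" "A \<subseteq> {1..2}" "measure lborel A > 3/4"
    and "\<And>l m. l \<in> A \<Longrightarrow> n0 \<le> m \<Longrightarrow> \<bar>L (l * real m) / L (real m) - 1\<bar> < \<epsilon>"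
proof -
  have [measurable]: "L \<in> borel_measurable borel"
    and lim: "\<And>l. l > 0 \<Longrightarrow> ((\<lambda>x. L (l * x) / L x) \<longlongrightarrow> 1) at_top"
    using assms(1) unfolding slowly_varying_def by auto
  define A where "A n = {l\<in>{1..2::real}. \<forall>m\<ge>n. \<bar>L (l * real m) / L (real m) - 1\<bar> < \<epsilon>}" for n
  have A_sets[measurable]: "A n \<in> sets borel" for n
    unfolding A_def by measurable
  have "incseq A" by (auto simp: incseq_def A_def)
  moreover have "(\<Union>n. A n) = {1..2}"
  proof (intro antisym subsetI)
    fix l :: real assume l: "l \<in> {1..2}"
    have "(\<lambda>m. L (l * real m) / L (real m)) \<longlonglongrightarrow> 1"
      using filterlim_compose[OF lim filterlim_real_sequentially, of l] l by simp
    from LIMSEQ_D[OF this \<open>\<epsilon> > 0\<close>] obtain n where "l \<in> A n"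
      using l by (auto simp: A_def)
    then show "l \<in> (\<Union>n. A n)" by blast
  qed (auto simp: A_def)
  ultimately have "(\<lambda>n. emeasure lborel (A n)) \<longlonglongrightarrow> emeasure lborel (\<Union>n. A n)"
    by (intro Lim_emeasure_incseq) auto
  then have "(\<lambda>n. emeasure lborel (A n)) \<longlonglongrightarrow> ennreal 1"
    using \<open>(\<Union>n. A n) = {1..2}\<close> by simp
  from order_tendstoD(1)[OF this, of "ennreal (3/4)"]
  obtain n0 where n0: "ennreal (3/4) < emeasure lborel (A n0)"
    by (auto simp: eventually_sequentially ennreal_less_iff)
  have "emeasure lborel (A n0) \<le> emeasure lborel {1..2::real}"
    by (rule emeasure_mono) (auto simp: A_def)
  then have "emeasure lborel (A n0) = ennreal (measure lborel (A n0))"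
    by (intro emeasure_eq_ennreal_measure) (auto simp: top_unique)
  with n0 have "measure lborel (A n0) > 3/4"
    by (simp add: ennreal_less_iff)
  moreover have "A n0 \<subseteq> {1..2}" by (auto simp: A_def)
  moreover have "\<bar>L (l * real m) / L (real m) - 1\<bar> < \<epsilon>" if "l \<in> A n0" "n0 \<le> m" for l m
    using that by (auto simp: A_def)
  ultimately show thesis
    using that A_sets by blast
qed

lemma abs_divide_minus_one_le:
  fixes p q c :: real
  assumes "c \<le> q" "0 < c"
  shows "\<bar>p / q - 1\<bar> \<le> \<bar>p - q\<bar> / c"
proof -
  have "\<bar>p / q - 1\<bar> = \<bar>p - q\<bar> / q" using assms by (simp add: field_simps abs_div)
  also have "\<dots> \<le> \<bar>p - q\<bar> / c" using assms by (intro divide_left_mono) auto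
  finally show ?thesis .
qed

text \<open>
  Since \<open>n + 1 = t n\<close> with \<open>t\<close> depending on \<open>n\<close>, the pointwise definition does not apply
  directly. Measurability makes the scales that are uniformly good for large \<open>m\<close> a set of
  measure \<open>> 3/4\<close> in \<open>[1, 2]\<close>; it contains some \<open>l\<close> together with \<open>t l\<close>, and
  \<open>L(n + 1) / L(n)\<close> is the quotient of \<open>L(l (n + 1)) / L(n)\<close> and \<open>L(l (n + 1)) / L(n + 1)\<close>.
\<close>

lemma slowly_varying_Suc_ratio:
  assumes "slowly_varying L"
  shows "(\<lambda>n. L (real (Suc n)) / L (real n)) \<longlonglongrightarrow> 1"
proof (rule LIMSEQ_I)
  fix r :: real assume "r > 0"
  define \<epsilon> where "\<epsilon> = min (1/4) (r/4)"
  have \<epsilon>: "0 < \<epsilon>" "\<epsilon> \<le> 1/4" "4 * \<epsilon> \<le> r" using \<open>r > 0\<close> by (auto simp: \<epsilon>_def)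
  obtain A n0 where A: "A \<in> sets borel" "A \<subseteq> {1..2}" "measure lborel A > 3/4"
    and near: "\<And>l m. l \<in> A \<Longrightarrow> n0 \<le> m \<Longrightarrow> \<bar>L (l * real m) / L (real m) - 1\<bar> < \<epsilon>"
    using slowly_varying_uniform_on_large_set[OF assms \<epsilon>(1)] by blast
  obtain X where X: "\<And>x. x \<ge> X \<Longrightarrow> L x > 0"
    using assms by (auto simp: slowly_varying_def eventually_at_top_linorder)
  show "\<exists>N. \<forall>m\<ge>N. norm (L (real (Suc m)) / L (real m) - 1) < r"
  proof (intro exI allI impI)
    fix m assume m: "max n0 (max 3 (nat \<lceil>X\<rceil>)) \<le> m"
    then have "real m \<ge> 3" "real m \<ge> X" "n0 \<le> m"
      using real_nat_ceiling_ge[of X] by linarith+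
    define t where "t = real (Suc m) / real m"
    have "1 \<le> t" "t \<le> 4/3" using \<open>real m \<ge> 3\<close> by (auto simp: t_def field_simps)
    then obtain l where l: "l \<in> A" "t * l \<in> A"
      using large_subset_contains_scaled_pair[OF A] by blast
    have Lpos: "L (real m) > 0" "L (real (Suc m)) > 0" using X \<open>real m \<ge> X\<close> by auto
    define u where "u = L (l * real (Suc m))"
    have "L (t * l * real m) = u" using \<open>real m \<ge> 3\<close> by (simp add: t_def u_def mult.commute)
    then have p: "\<bar>u / L (real m) - 1\<bar> < \<epsilon>"
      using near[OF l(2) \<open>n0 \<le> m\<close>] by (simp add: u_def)
    have q: "\<bar>u / L (real (Suc m)) - 1\<bar> < \<epsilon>"
      using near[OF l(1), of "Suc m"] \<open>n0 \<le> m\<close> by (simp add: u_def)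
    have "u / L (real (Suc m)) \<ge> 3/4" using q \<epsilon>(2) by linarith
    then have "\<bar>(u / L (real m)) / (u / L (real (Suc m))) - 1\<bar> \<le> \<bar>u / L (real m) - u / L (real (Suc m))\<bar> / (3/4)"
      by (rule abs_divide_minus_one_le) simp
    also have "\<dots> < r"
    proof -
      have "\<bar>u / L (real m) - u / L (real (Suc m))\<bar> < 2 * \<epsilon>" using p q by arith
      then show ?thesis using \<epsilon> by simp
    qed
    also have "(u / L (real m)) / (u / L (real (Suc m))) = L (real (Suc m)) / L (real m)"
      using Lpos q \<epsilon> by (cases "u = 0") auto
    finally show "norm (L (real (Suc m)) / L (real m) - 1) < r" by simp
  qed
qed

lemma regularly_varying_Suc_ratio:
  fixes c :: "nat \<Rightarrow> real"
  assumes "slowly_varying L" and c: "c \<sim>[sequentially] (\<lambda>k. L (real k) * real k powr a)"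
    and "\<And>k. c k \<noteq> 0"
  shows "(\<lambda>k. c k / c (Suc k)) \<longlonglongrightarrow> 1"
proof -
  define g where "g = (\<lambda>k. L (real k) * real k powr a)"
  obtain X where X: "\<And>x. x \<ge> X \<Longrightarrow> L x > 0"
    using assms(1) by (auto simp: slowly_varying_def eventually_at_top_linorder)
  have "eventually (\<lambda>k. L (real (Suc k)) / L (real k) * (real (Suc k) / real k) powr a = g (Suc k) / g k) sequentially"
    using eventually_ge_at_top[of "max 1 (nat \<lceil>X\<rceil>)"]
  proof eventually_elim
    case (elim k)
    then have "real k \<ge> 1" "real k \<ge> X" using real_nat_ceiling_ge[of X] by linarith+
    then show ?case using X[of "real k"] by (simp add: g_def powr_divide)
  qed
  moreover have "(\<lambda>k. L (real (Suc k)) / L (real k) * (real (Suc k) / real k) powr a) \<longlonglongrightarrow> 1 * 1 powr a"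
    by (intro tendsto_intros slowly_varying_Suc_ratio[OF assms(1)] LIMSEQ_Suc_n_over_n) simp
  ultimately have "(\<lambda>k. g (Suc k) / g k) \<longlonglongrightarrow> 1"
    by (simp add: tendsto_cong)
  then have g_Suc: "(\<lambda>k. g (Suc k)) \<sim>[sequentially] g"
    by (rule asymp_equivI')
  have "c \<sim>[sequentially] g" using c by (simp add: g_def)
  also have "g \<sim>[sequentially] (\<lambda>k. g (Suc k))" using g_Suc by (simp add: asymp_equiv_sym)
  also have "(\<lambda>k. g (Suc k)) \<sim>[sequentially] (\<lambda>k. c (Suc k))"
    using asymp_equiv_compose'[OF \<open>c \<sim>[sequentially] g\<close> filterlim_Suc] by (simp add: asymp_equiv_sym)
  finally show ?thesis
    using assms(3) by (intro asymp_equivD_strong) auto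
qed

lemma abs_frac_diff_le:
  fixes a b c :: real
  assumes "0 \<le> c" "c \<le> a" "c \<le> b"
  shows "\<bar>a / (1 + a) - b / (1 + b)\<bar> \<le> \<bar>a - b\<bar> / (1 + c)"
proof -
  have "1 + c \<le> (1 + a) * (1 + b)"
    using assms mult_mono[of 1 "1 + a" "1 + c" "1 + b"] by (simp add: algebra_simps)
  moreover have "a / (1 + a) - b / (1 + b) = (a - b) / ((1 + a) * (1 + b))"
    using assms by (simp add: field_simps)
  ultimately show ?thesis
    using assms by (simp add: abs_div abs_mult divide_left_mono)
qed

lemma frac_mono: "0 \<le> y \<Longrightarrow> y \<le> z \<Longrightarrow> y / (1 + y) \<le> z / (1 + (z::real))"
  by (simp add: field_simps)

lemma abs_integral_diff_le:
  fixes f g h :: "'a \<Rightarrow> real"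
  assumes "integrable M f" "integrable M g" "integrable M h"
    and "\<And>x. x \<in> space M \<Longrightarrow> \<bar>f x - g x\<bar> \<le> h x"
  shows "\<bar>integral\<^sup>L M f - integral\<^sup>L M g\<bar> \<le> integral\<^sup>L M h"
proof -
  have "\<bar>integral\<^sup>L M f - integral\<^sup>L M g\<bar> = \<bar>\<integral>x. f x - g x \<partial>M\<bar>"
    using assms by simp
  also have "\<dots> \<le> (\<integral>x. \<bar>f x - g x\<bar> \<partial>M)"
    by (rule integral_abs_bound)
  also have "\<dots> \<le> integral\<^sup>L M h"
    using assms by (intro integral_mono) auto
  finally show ?thesis .
qed

lemma contractive_recurrence_tendsto_zero:
  fixes e \<delta> :: "nat \<Rightarrow> real"
  assumes e: "\<And>k. 0 \<le> e k" "\<And>k. e (Suc k) \<le> \<theta> * e k + \<delta> k"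
    and \<theta>: "0 \<le> \<theta>" "\<theta> < 1" and \<delta>: "\<delta> \<longlonglongrightarrow> 0"
  shows "e \<longlonglongrightarrow> 0"
proof (rule LIMSEQ_I)
  fix \<epsilon> :: real assume "\<epsilon> > 0"
  then obtain N where N: "\<And>k. k \<ge> N \<Longrightarrow> \<bar>\<delta> k\<bar> < (1 - \<theta>) * \<epsilon> / 2"
    using LIMSEQ_D[OF \<delta>, of "(1 - \<theta>) * \<epsilon> / 2"] \<theta> by auto
  have tail: "e (N + j) \<le> \<theta> ^ j * e N + \<epsilon> / 2" for j
  proof (induction j)
    case (Suc j)
    have "e (N + Suc j) \<le> \<theta> * e (N + j) + \<delta> (N + j)" using e(2)[of "N + j"] by simp
    also have "\<dots> \<le> \<theta> * (\<theta> ^ j * e N + \<epsilon> / 2) + (1 - \<theta>) * \<epsilon> / 2"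
      using Suc.IH N[of "N + j"] \<theta> by (intro add_mono mult_left_mono) auto
    also have "\<dots> = \<theta> ^ Suc j * e N + \<epsilon> / 2" by (simp add: field_simps)
    finally show ?case .
  qed (use \<open>\<epsilon> > 0\<close> in simp)
  have "(\<lambda>j. \<theta> ^ j * e N) \<longlonglongrightarrow> 0"
    using \<theta> by (intro tendsto_mult_left_zero LIMSEQ_power_zero) auto
  then obtain J where J: "\<And>j. j \<ge> J \<Longrightarrow> \<theta> ^ j * e N < \<epsilon> / 2"
    using LIMSEQ_D[of _ 0 "\<epsilon> / 2"] \<open>\<epsilon> > 0\<close> by fastforce
  show "\<exists>N'. \<forall>n\<ge>N'. norm (e n - 0) < \<epsilon>"
  proof (intro exI allI impI)
    fix n assume "N + J \<le> n"
    then have "e n \<le> \<theta> ^ (n - N) * e N + \<epsilon> / 2" and "\<theta> ^ (n - N) * e N < \<epsilon> / 2"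
      using tail[of "n - N"] J[of "n - N"] by auto
    then show "norm (e n - 0) < \<epsilon>" using e(1)[of n] by simp
  qed
qed

locale positive_random_variable = prob_space M for M :: "'a measure" +
  fixes \<rho> :: "'a \<Rightarrow> real"
  assumes rv_measurable[measurable]: "\<rho> \<in> borel_measurable M"
    and rv_pos: "x \<in> space M \<Longrightarrow> \<rho> x > 0"
begin

lemma affine_rv_nonneg: "s \<ge> 0 \<Longrightarrow> r \<ge> 0 \<Longrightarrow> x \<in> space M \<Longrightarrow> s * \<rho> x + r \<ge> 0"
  using rv_pos[of x] by simp

lemma frac_rv_bounds:
  assumes "s \<ge> 0" "r \<ge> 0" "x \<in> space M"
  shows "0 \<le> (s * \<rho> x + r) / (1 + (s * \<rho> x + r))" "(s * \<rho> x + r) / (1 + (s * \<rho> x + r)) < 1"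
  using affine_rv_nonneg[OF assms] by simp_all

definition mean_frac :: "real \<Rightarrow> real \<Rightarrow> real" where
  "mean_frac s r = (\<integral>x. (s * \<rho> x + r) / (1 + (s * \<rho> x + r)) \<partial>M)"

lemma integrable_frac:
  assumes "s \<ge> 0" "r \<ge> 0"
  shows "integrable M (\<lambda>x. (s * \<rho> x + r) / (1 + (s * \<rho> x + r)))"
proof (rule integrable_const_bound[where B = 1])
  show "AE x in M. norm ((s * \<rho> x + r) / (1 + (s * \<rho> x + r))) \<le> 1"
    using frac_rv_bounds[OF assms] by (intro AE_I2) (simp add: abs_le_iff less_imp_le del: abs_divide)
qed simp

lemma mean_frac_nonneg: "s \<ge> 0 \<Longrightarrow> r \<ge> 0 \<Longrightarrow> mean_frac s r \<ge> 0"
  unfolding mean_frac_def using frac_rv_bounds by (intro integral_nonneg_AE AE_I2) simp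

lemma mean_frac_less_one:
  assumes "s \<ge> 0" "r \<ge> 0"
  shows "mean_frac s r < 1"
proof -
  have "mean_frac s r < (\<integral>x. 1 \<partial>M)"
    unfolding mean_frac_def using frac_rv_bounds[OF assms]
    by (intro integral_less_AE_space integrable_frac AE_I2) (simp_all add: assms emeasure_space_1)
  then show ?thesis by (simp add: prob_space)
qed

lemma mean_frac_pos:
  assumes "s > 0" "r \<ge> 0"
  shows "mean_frac s r > 0"
proof -
  have "(\<integral>x. 0 \<partial>M) < mean_frac s r"
    unfolding mean_frac_def using assms rv_pos
    by (intro integral_less_AE_space integrable_frac AE_I2) (auto simp: emeasure_space_1 intro!: divide_pos_pos add_pos_nonneg less_imp_le)
  then show ?thesis by simp
qed

lemma mean_frac_mono:
  assumes "s \<ge> 0" "0 \<le> r" "r \<le> r'"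
  shows "mean_frac s r \<le> mean_frac s r'"
  unfolding mean_frac_def using assms affine_rv_nonneg
  by (intro integral_mono integrable_frac frac_mono) auto

text \<open>The constant \<open>1 - mean_frac s 0\<close> is \<open>E[1 / (1 + s\<rho>)]\<close>, which is \<open>< 1\<close> for \<open>s > 0\<close>.\<close>

lemma mean_frac_lipschitz:
  assumes "s \<ge> 0" "r \<ge> 0" "r' \<ge> 0"
  shows "\<bar>mean_frac s r - mean_frac s r'\<bar> \<le> (1 - mean_frac s 0) * \<bar>r - r'\<bar>"
proof -
  have bound_integrable: "integrable M (\<lambda>x. \<bar>r - r'\<bar> * (1 - (s * \<rho> x + 0) / (1 + (s * \<rho> x + 0))))"
    using integrable_frac[OF assms(1) order_refl] by simp
  have "\<bar>mean_frac s r - mean_frac s r'\<bar>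
      \<le> (\<integral>x. \<bar>r - r'\<bar> * (1 - (s * \<rho> x + 0) / (1 + (s * \<rho> x + 0))) \<partial>M)"
    unfolding mean_frac_def
  proof (rule abs_integral_diff_le)
    fix x assume x: "x \<in> space M"
    have "\<bar>(s * \<rho> x + r) / (1 + (s * \<rho> x + r)) - (s * \<rho> x + r') / (1 + (s * \<rho> x + r'))\<bar>
        \<le> \<bar>(s * \<rho> x + r) - (s * \<rho> x + r')\<bar> / (1 + s * \<rho> x)"
      using affine_rv_nonneg[OF assms(1) order_refl x] assms by (intro abs_frac_diff_le) auto
    also have "\<dots> = \<bar>r - r'\<bar> * (1 - (s * \<rho> x + 0) / (1 + (s * \<rho> x + 0)))"
      using affine_rv_nonneg[OF assms(1) order_refl x] by (simp add: field_simps)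
    finally show "\<bar>(s * \<rho> x + r) / (1 + (s * \<rho> x + r)) - (s * \<rho> x + r') / (1 + (s * \<rho> x + r'))\<bar>
        \<le> \<bar>r - r'\<bar> * (1 - (s * \<rho> x + 0) / (1 + (s * \<rho> x + 0)))" .
  qed (use assms integrable_frac bound_integrable in auto)
  also have "\<dots> = (1 - mean_frac s 0) * \<bar>r - r'\<bar>"
    using integrable_frac[OF assms(1) order_refl]
    by (simp add: mean_frac_def prob_space mult.commute)
  finally show ?thesis .
qed

lemma mean_frac_lipschitz_scale:
  assumes "integrable M \<rho>" "s \<ge> 0" "s' \<ge> 0" "r \<ge> 0"
  shows "\<bar>mean_frac s r - mean_frac s' r\<bar> \<le> \<bar>s - s'\<bar> * expectation \<rho>"
proof -
  have "\<bar>mean_frac s r - mean_frac s' r\<bar> \<le> (\<integral>x. \<bar>s - s'\<bar> * \<rho> x \<partial>M)"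
    unfolding mean_frac_def
  proof (rule abs_integral_diff_le)
    fix x assume x: "x \<in> space M"
    have "\<bar>(s * \<rho> x + r) / (1 + (s * \<rho> x + r)) - (s' * \<rho> x + r) / (1 + (s' * \<rho> x + r))\<bar>
        \<le> \<bar>(s * \<rho> x + r) - (s' * \<rho> x + r)\<bar> / (1 + 0)"
      using affine_rv_nonneg[OF _ _ x] assms by (intro abs_frac_diff_le) auto
    also have "\<dots> = \<bar>s - s'\<bar> * \<rho> x"
      using rv_pos[OF x] by (simp add: abs_mult left_diff_distrib[symmetric])
    finally show "\<bar>(s * \<rho> x + r) / (1 + (s * \<rho> x + r)) - (s' * \<rho> x + r) / (1 + (s' * \<rho> x + r))\<bar>
        \<le> \<bar>s - s'\<bar> * \<rho> x" .
  qed (use assms integrable_frac in auto)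
  then show ?thesis by simp
qed

lemma mean_frac_tendsto_one:
  assumes "\<And>k. s k \<ge> 0" and "filterlim s at_top sequentially"
  shows "(\<lambda>k. mean_frac (s k) 0) \<longlonglongrightarrow> 1"
proof -
  have "(\<lambda>k. mean_frac (s k) 0) \<longlonglongrightarrow> (\<integral>x. 1 \<partial>M)"
    unfolding mean_frac_def
  proof (rule integral_dominated_convergence[where w = "\<lambda>_. 1"])
    show "AE x in M. (\<lambda>k. (s k * \<rho> x + 0) / (1 + (s k * \<rho> x + 0))) \<longlonglongrightarrow> 1"
    proof (rule AE_I2)
      fix x assume x: "x \<in> space M"
      have "filterlim (\<lambda>k. 1 + s k * \<rho> x) at_top sequentially"
        using rv_pos[OF x] assms(2)
        by (intro filterlim_tendsto_add_at_top[OF tendsto_const] filterlim_at_top_mult_tendsto_pos[OF tendsto_const]) auto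
      then have "(\<lambda>k. 1 - inverse (1 + s k * \<rho> x)) \<longlonglongrightarrow> 1 - 0"
        by (intro tendsto_diff tendsto_const tendsto_inverse_0_at_top)
      moreover have "1 - inverse (1 + s k * \<rho> x) = (s k * \<rho> x + 0) / (1 + (s k * \<rho> x + 0))" for k
        using affine_rv_nonneg[OF assms(1)[of k] order_refl x] by (simp add: field_simps)
      ultimately show "(\<lambda>k. (s k * \<rho> x + 0) / (1 + (s k * \<rho> x + 0))) \<longlonglongrightarrow> 1" by simp
    qed
    show "AE x in M. norm ((s k * \<rho> x + 0) / (1 + (s k * \<rho> x + 0))) \<le> 1" for k
      using frac_rv_bounds[OF assms(1) order_refl]
      by (intro AE_I2) (simp add: abs_le_iff less_imp_le del: abs_divide)
  qed (use assms(1) integrable_frac in auto)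
  then show ?thesis by (simp add: prob_space)
qed

lemma mean_frac_unique_fixed_point:
  assumes "s > 0"
  shows "\<exists>!m. 0 < m \<and> m < 1 \<and> m = mean_frac s m"
proof -
  define \<theta> where "\<theta> = 1 - mean_frac s 0"
  have \<theta>: "0 \<le> \<theta>" "\<theta> < 1"
    using mean_frac_pos[OF assms] mean_frac_less_one[of s 0] assms by (auto simp: \<theta>_def)
  have contraction: "\<bar>mean_frac s u - mean_frac s v\<bar> \<le> \<theta> * \<bar>u - v\<bar>" if "u \<ge> 0" "v \<ge> 0" for u v
    using mean_frac_lipschitz[of s u v] assms that by (simp add: \<theta>_def)
  have "\<exists>!m\<in>{0..1}. mean_frac s m = m"
  proof (rule Banach_fix[OF _ _ \<theta>])
    show "mean_frac s ` {0..1} \<subseteq> {0..1}"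
      using mean_frac_nonneg[of s] mean_frac_less_one[of s] less_imp_le[OF assms]
      by (force intro: less_imp_le)
    show "dist (mean_frac s u) (mean_frac s v) \<le> \<theta> * dist u v" if "u \<in> {0..1}" "v \<in> {0..1}" for u v
      using contraction that by (simp add: dist_real_def)
  qed (auto simp: complete_eq_closed)
  then obtain m where "m \<in> {0..1}" "mean_frac s m = m" by blast
  then have m: "0 < m \<and> m < 1 \<and> m = mean_frac s m"
    using mean_frac_pos[OF assms] mean_frac_less_one[of s m] assms by force
  moreover have "m' = m" if "0 < m' \<and> m' < 1 \<and> m' = mean_frac s m'" for m'
  proof -
    have "\<bar>m' - m\<bar> \<le> \<theta> * \<bar>m' - m\<bar>" using contraction[of m' m] that m by simp
    then show ?thesis using \<theta> by (simp add: mult_le_cancel_right1)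
  qed
  ultimately show ?thesis by blast
qed

lemma integral_rescaled_frac:
  assumes "c > 0" "\<mu> \<ge> 0" "d \<ge> 0"
  shows "(\<integral>x. c * (\<mu> * \<rho> x + d) / (c + (\<mu> * \<rho> x + d)) \<partial>M) = c * mean_frac (\<mu> / c) (d / c)"
proof -
  have "c * (\<mu> * \<rho> x + d) / (c + (\<mu> * \<rho> x + d))
      = c * ((\<mu> / c * \<rho> x + d / c) / (1 + (\<mu> / c * \<rho> x + d / c)))" if "x \<in> space M" for x
  proof -
    define y where "y = \<mu> * \<rho> x + d"
    have "y \<ge> 0" using affine_rv_nonneg[OF assms(2,3) that] by (simp add: y_def)
    moreover have "\<mu> / c * \<rho> x + d / c = y / c" by (simp add: y_def add_divide_distrib)
    ultimately show ?thesis using assms(1) unfolding y_def[symmetric] by (simp add: field_simps)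
  qed
  then have "(\<integral>x. c * (\<mu> * \<rho> x + d) / (c + (\<mu> * \<rho> x + d)) \<partial>M)
      = (\<integral>x. c * ((\<mu> / c * \<rho> x + d / c) / (1 + (\<mu> / c * \<rho> x + d / c))) \<partial>M)"
    by (rule Bochner_Integration.integral_cong[OF refl])
  also have "\<dots> = c * mean_frac (\<mu> / c) (d / c)"
    unfolding mean_frac_def by (rule integral_mult_right_zero)
  finally show ?thesis .
qed

context
  fixes r q s :: "nat \<Rightarrow> real"
  assumes r_nonneg: "\<And>k. r k \<ge> 0"
    and r_Suc: "\<And>k. r (Suc k) = q k * mean_frac (s k) (r k)"
    and q_tendsto: "q \<longlonglongrightarrow> 1"
    and s_nonneg: "\<And>k. s k \<ge> 0"
begin

lemma recursion_tendsto_one: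
  assumes "\<And>k. q k \<ge> 0" and "filterlim s at_top sequentially"
  shows "r \<longlonglongrightarrow> 1"
proof -
  have "(\<lambda>k. r (Suc k)) \<longlonglongrightarrow> 1"
  proof (rule tendsto_sandwich[OF always_eventually always_eventually])
    show "\<forall>k. q k * mean_frac (s k) 0 \<le> r (Suc k)"
      using mean_frac_mono[OF s_nonneg order_refl r_nonneg] assms(1)
      by (simp add: r_Suc mult_left_mono)
    show "\<forall>k. r (Suc k) \<le> q k"
      using mean_frac_less_one[OF s_nonneg r_nonneg] assms(1)
      by (simp add: r_Suc mult_left_le less_imp_le)
    show "(\<lambda>k. q k * mean_frac (s k) 0) \<longlonglongrightarrow> 1"
      using tendsto_mult[OF q_tendsto mean_frac_tendsto_one[OF s_nonneg assms(2)]] by simp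
  qed (rule q_tendsto)
  then show ?thesis by (rule LIMSEQ_imp_Suc)
qed

lemma recursion_tendsto_fixed_point:
  assumes "integrable M \<rho>" and "s \<longlonglongrightarrow> s0" and "s0 > 0"
  shows "r \<longlonglongrightarrow> (THE m. 0 < m \<and> m < 1 \<and> m = mean_frac s0 m)"
proof -
  define m where "m = (THE m. 0 < m \<and> m < 1 \<and> m = mean_frac s0 m)"
  have m: "0 < m" "m < 1" "m = mean_frac s0 m"
    unfolding m_def using theI'[OF mean_frac_unique_fixed_point[OF assms(3)]] by auto
  define \<theta> where "\<theta> = 1 - mean_frac s0 0"
  have \<theta>: "0 \<le> \<theta>" "\<theta> < 1"
    using mean_frac_pos[OF assms(3)] mean_frac_less_one[of s0 0] assms(3) by (auto simp: \<theta>_def)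
  define \<delta> where "\<delta> k = \<bar>q k - 1\<bar> + \<bar>s k - s0\<bar> * expectation \<rho>" for k
  have "(\<lambda>k. \<bar>r k - m\<bar>) \<longlonglongrightarrow> 0"
  proof (rule contractive_recurrence_tendsto_zero[OF _ _ \<theta>])
    show "\<delta> \<longlonglongrightarrow> 0"
      unfolding \<delta>_def using tendsto_add[OF tendsto_rabs_zero[OF LIM_zero[OF q_tendsto]]
        tendsto_mult_left_zero[OF tendsto_rabs_zero[OF LIM_zero[OF assms(2)]]]] by simp
    fix k
    let ?G = "mean_frac (s k) (r k)"
    have "r (Suc k) - m = (q k - 1) * ?G + (?G - mean_frac s0 (r k)) + (mean_frac s0 (r k) - mean_frac s0 m)"
      using m(3) by (simp add: r_Suc algebra_simps)
    also have "\<bar>\<dots>\<bar> \<le> \<bar>q k - 1\<bar> + \<bar>s k - s0\<bar> * expectation \<rho> + \<theta> * \<bar>r k - m\<bar>"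
    proof (intro order_trans[OF abs_triangle_ineq] order_trans[OF add_mono[OF abs_triangle_ineq order_refl]] add_mono)
      show "\<bar>(q k - 1) * ?G\<bar> \<le> \<bar>q k - 1\<bar>"
        using mean_frac_nonneg[OF s_nonneg r_nonneg, of k k] mean_frac_less_one[OF s_nonneg r_nonneg, of k k]
        by (simp add: abs_mult mult_left_le less_imp_le)
      show "\<bar>?G - mean_frac s0 (r k)\<bar> \<le> \<bar>s k - s0\<bar> * expectation \<rho>"
        using mean_frac_lipschitz_scale[OF assms(1) s_nonneg _ r_nonneg] assms(3) by simp
      show "\<bar>mean_frac s0 (r k) - mean_frac s0 m\<bar> \<le> \<theta> * \<bar>r k - m\<bar>"
        using mean_frac_lipschitz[OF _ r_nonneg, of s0 m] assms(3) m by (simp add: \<theta>_def)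
    qed
    finally show "\<bar>r (Suc k) - m\<bar> \<le> \<theta> * \<bar>r k - m\<bar> + \<delta> k" by (simp add: \<delta>_def)
  qed simp
  then show ?thesis
    unfolding m_def[symmetric] by (simp add: LIM_zero_iff tendsto_rabs_zero_iff)
qed

end

lemma normalized_recursion:
  fixes c \<mu> d :: "nat \<Rightarrow> real"
  assumes "\<And>k. c k > 0" "\<And>k. \<mu> k \<ge> 0" "d 0 \<ge> 0"
    and "\<And>k. d (Suc k) = (\<integral>x. c k * (\<mu> k * \<rho> x + d k) / (c k + (\<mu> k * \<rho> x + d k)) \<partial>M)"
  shows "d k / c k \<ge> 0"
    and "d (Suc k) / c (Suc k) = c k / c (Suc k) * mean_frac (\<mu> k / c k) (d k / c k)"
proof -
  have d_Suc: "d (Suc n) = c n * mean_frac (\<mu> n / c n) (d n / c n)" if "d n \<ge> 0" for n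
    using assms(4) integral_rescaled_frac[OF assms(1,2) that] by simp
  have d_nonneg: "d n \<ge> 0" for n
  proof (induction n)
    case (Suc n)
    then show ?case
      using d_Suc[OF Suc] mean_frac_nonneg[of "\<mu> n / c n" "d n / c n"] assms(1,2)[of n] by simp
  qed (use assms(3) in simp)
  show "d k / c k \<ge> 0" "d (Suc k) / c (Suc k) = c k / c (Suc k) * mean_frac (\<mu> k / c k) (d k / c k)"
    using d_nonneg[of k] d_Suc[OF d_nonneg[of k]] assms(1)[of k] by simp_all
qed

end

theorem theorem3p10:
  fixes M :: "'a measure" and \<rho> :: "'a \<Rightarrow> real"
    and c \<mu> d :: "nat \<Rightarrow> real" and a b :: real
    and Lc L\<mu> :: "real \<Rightarrow> real" and K :: ereal
  assumes "prob_space M"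
    and "\<rho> \<in> borel_measurable M"
    and "\<forall>x\<in>space M. \<rho> x > 0"
    and "integrable M \<rho>" and "(\<integral>x. \<rho> x \<partial>M) = 1"
    and "\<forall>k. c k > 0" and "\<forall>k. \<mu> k > 0" and "d 0 \<ge> 0"
    and "\<forall>k. d (Suc k) = (\<integral>x. c k * (\<mu> k * \<rho> x + d k) / (c k + (\<mu> k * \<rho> x + d k)) \<partial>M)"
    and "slowly_varying Lc" and "slowly_varying L\<mu>"
    and "c \<sim>[sequentially] (\<lambda>k. Lc (real k) * real k powr a)"
    and "\<mu> \<sim>[sequentially] (\<lambda>k. L\<mu> (real k) * real k powr b)"
    and "K \<ge> 0"
    and "(\<lambda>k. ereal (\<mu> k / c k)) \<longlonglongrightarrow> K"
  shows "(K = \<infinity> \<longrightarrow> (\<lambda>k. d k / c k) \<longlonglongrightarrow> 1) \<and>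
         (0 < K \<and> K < \<infinity> \<longrightarrow>
            (\<exists>!m. 0 < m \<and> m < 1 \<and>
                 m = (\<integral>x. (real_of_ereal K * \<rho> x + m) / (1 + (real_of_ereal K * \<rho> x + m)) \<partial>M))
          \<and> (\<lambda>k. d k / c k) \<longlonglongrightarrow>
              (THE m. 0 < m \<and> m < 1 \<and>
                 m = (\<integral>x. (real_of_ereal K * \<rho> x + m) / (1 + (real_of_ereal K * \<rho> x + m)) \<partial>M)))"
proof -
  interpret positive_random_variable M \<rho>
    using assms(1-3) by (simp add: positive_random_variable_def positive_random_variable_axioms_def)
  have c_pos: "c k > 0" for k using assms(6) by auto
  define r where "r = (\<lambda>k. d k / c k)"
  define s where "s = (\<lambda>k. \<mu> k / c k)"
  define q where "q = (\<lambda>k. c k / c (Suc k))"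
  have r_nonneg: "r k \<ge> 0" and r_Suc: "r (Suc k) = q k * mean_frac (s k) (r k)" for k
    using normalized_recursion[of c \<mu> d k] assms(6-9) by (auto simp: r_def s_def q_def less_imp_le)
  have s_nonneg: "s k \<ge> 0" for k using assms(6,7) by (simp add: s_def less_imp_le)
  have q_tendsto: "q \<longlonglongrightarrow> 1"
    unfolding q_def using regularly_varying_Suc_ratio[OF assms(10,12)] c_pos by (simp add: less_imp_neq[symmetric])
  show ?thesis
  proof (intro conjI impI)
    assume "K = \<infinity>"
    then have "filterlim s at_top sequentially"
      using assms(15) by (simp add: s_def tendsto_PInfty_eq_at_top)
    then show "(\<lambda>k. d k / c k) \<longlonglongrightarrow> 1"
      using recursion_tendsto_one[OF r_nonneg r_Suc q_tendsto s_nonneg] c_pos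
      by (simp add: r_def q_def less_imp_le)
  next
    assume "0 < K \<and> K < \<infinity>"
    then obtain s0 where K: "K = ereal s0" and "s0 > 0" by (cases K) auto
    have "s \<longlonglongrightarrow> s0" using assms(15) K by (simp add: s_def)
    then show "(\<lambda>k. d k / c k) \<longlonglongrightarrow> (THE m. 0 < m \<and> m < 1 \<and>
                 m = (\<integral>x. (real_of_ereal K * \<rho> x + m) / (1 + (real_of_ereal K * \<rho> x + m)) \<partial>M))"
      using recursion_tendsto_fixed_point[OF r_nonneg r_Suc q_tendsto s_nonneg assms(4) _ \<open>s0 > 0\<close>]
      by (simp add: K r_def mean_frac_def)
    show "\<exists>!m. 0 < m \<and> m < 1 \<and>
                 m = (\<integral>x. (real_of_ereal K * \<rho> x + m) / (1 + (real_of_ereal K * \<rho> x + m)) \<partial>M)"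
      using mean_frac_unique_fixed_point[OF \<open>s0 > 0\<close>] by (simp add: K mean_frac_def)
  qed
qed

end
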